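(* For any monotone total order $T$ on $\Omega$ and any homogeneous sample $\mathbf{S}_k = (S_k,\dots,S_k) \in \Omega$, $$\Omega(\mathbf{S}_k, T_\ell) \subseteq \Omega(\mathbf{S}_k, T) \subseteq \Omega(\mathbf{S}_k, T_h).$$
   Context: Let $S \subset \mathbb{R}$ be a finite set and $\Omega$ the set of samples of size $n$ with entries in $S$, identified with their sorted versions $x_{(1)} \le \dots \le x_{(n)}$. For $\mathbf{x},\mathbf{y} \in \Omega$ write $\mathbf{x} \le \mathbf{y}$ if $x_{(j)} \le y_{(j)}$ for all $j$. A total order $T$ on $\Omega$ is monotone if $\mathbf{x} \le \mathbf{y}$ implies $\mathbf{x} \le_T \mathbf{y}$. For a total order $T$, the upper set is $\Omega(\mathbf{x},T) = \{\mathbf{y} \in \Omega : \mathbf{x} \le_T \mathbf{y}\}$. The low lexicographic order $T_\ell$: $\mathbf{x} \le_{T_\ell} \mathbf{y}$ iff $\mathbf{x} = \mathbf{y}$ or, for the smallest index $j$ with $x_{(j)} \ne y_{(j)}$, $x_{(j)} < y_{(j)}$. The high lexicographic order $T_h$: same but with the largest such index $j$. *)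

theory Defs
  imports Main "HOL.Real"
begin

text \<open>Samples of size n with entries in S, identified with their sorted versions
  (sorted lists; x ! j is the (j+1)-th order statistic).\<close>
definition samples :: "real set \<Rightarrow> nat \<Rightarrow> real list set" where
  "samples S n = {xs. length xs = n \<and> sorted xs \<and> set xs \<subseteq> S}"

definition sample_le :: "real list \<Rightarrow> real list \<Rightarrow> bool" where
  "sample_le x y \<longleftrightarrow> length x = length y \<and> (\<forall>j<length x. x ! j \<le> y ! j)"

definition monotone_order :: "real list set \<Rightarrow> (real list \<times> real list) set \<Rightarrow> bool" where
  "monotone_order \<Omega> T \<longleftrightarrow> (\<forall>x\<in>\<Omega>. \<forall>y\<in>\<Omega>. sample_le x y \<longrightarrow> (x, y) \<in> T)"

definition upper_set :: "real list set \<Rightarrow> real list \<Rightarrow> (real list \<times> real list) set \<Rightarrow> real list set" where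
  "upper_set \<Omega> x T = {y\<in>\<Omega>. (x, y) \<in> T}"

definition low_lex :: "real list set \<Rightarrow> (real list \<times> real list) set" where
  "low_lex \<Omega> = {(x, y). x \<in> \<Omega> \<and> y \<in> \<Omega> \<and>
     (x = y \<or> (\<exists>j<length x. (\<forall>i<j. x ! i = y ! i) \<and> x ! j < y ! j))}"

definition high_lex :: "real list set \<Rightarrow> (real list \<times> real list) set" where
  "high_lex \<Omega> = {(x, y). x \<in> \<Omega> \<and> y \<in> \<Omega> \<and>
     (x = y \<or> (\<exists>j<length x. (\<forall>i. j < i \<and> i < length x \<longrightarrow> x ! i = y ! i) \<and> x ! j < y ! j))}"

end

theory Submission
  imports Defs
begin

(* For a sorted sample y, comparing y componentwise with the constant sample (s,...,s) only
   involves its extreme order statistics: (s,...,s) <= y iff s <= y_(1), and y <= (s,...,s) iff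
   y_(n) <= s. If (s,...,s) <=_low y, then y_(1) >= s, so y lies above (s,...,s) componentwise
   and hence in every monotone order. Conversely, if (s,...,s) <=_T y with y =/= (s,...,s), then
   y_(n) > s, since otherwise y <= (s,...,s) componentwise and antisymmetry of T would force
   equality; and y_(n) > s already means (s,...,s) <_high y at the last index. *)

lemma sample_le_replicate_left_iff:
  assumes "sorted y"
  shows "sample_le (replicate (length y) s) y \<longleftrightarrow> (y \<noteq> [] \<longrightarrow> s \<le> hd y)"
proof
  assume "sample_le (replicate (length y) s) y"
  then show "y \<noteq> [] \<longrightarrow> s \<le> hd y"
    by (auto simp: sample_le_def hd_conv_nth)
next
  assume hd: "y \<noteq> [] \<longrightarrow> s \<le> hd y"
  have "s \<le> y ! j" if "j < length y" for j
  proof -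
    have "s \<le> y ! 0" using hd that by (auto simp: hd_conv_nth)
    also have "\<dots> \<le> y ! j" using assms that by (simp add: sorted_nth_mono)
    finally show ?thesis .
  qed
  then show "sample_le (replicate (length y) s) y"
    by (simp add: sample_le_def)
qed

lemma sample_le_replicate_right_iff:
  assumes "sorted y"
  shows "sample_le y (replicate (length y) s) \<longleftrightarrow> (y \<noteq> [] \<longrightarrow> last y \<le> s)"
proof
  assume "sample_le y (replicate (length y) s)"
  then show "y \<noteq> [] \<longrightarrow> last y \<le> s"
    by (auto simp: sample_le_def last_conv_nth)
next
  assume last: "y \<noteq> [] \<longrightarrow> last y \<le> s"
  have "y ! j \<le> s" if "j < length y" for j
  proof -
    have "y ! j \<le> y ! (length y - 1)" using assms that by (simp add: sorted_nth_mono)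
    also have "\<dots> \<le> s" using last that by (auto simp: last_conv_nth)
    finally show ?thesis .
  qed
  then show "sample_le y (replicate (length y) s)"
    by (simp add: sample_le_def)
qed

lemma low_lex_replicate_imp_hd_ge:
  assumes "(replicate (length y) s, y) \<in> low_lex \<Omega>" and "y \<noteq> []"
  shows "s \<le> hd y"
proof -
  consider "y = replicate (length y) s"
    | j where "j < length y" "\<forall>i<j. s = y ! i" "s < y ! j"
    using assms(1) by (auto simp: low_lex_def)
  then show ?thesis
  proof cases
    case 1
    then show ?thesis using assms(2) by (metis hd_replicate length_0_conv order_refl)
  next
    case (2 j)
    then show ?thesis using assms(2) by (cases j) (auto simp: hd_conv_nth)
  qed
qed

lemma high_lex_replicate_if_last_gt:
  assumes "replicate (length y) s \<in> \<Omega>" and "y \<in> \<Omega>" and "y \<noteq> []" and "s < last y"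
  shows "(replicate (length y) s, y) \<in> high_lex \<Omega>"
  unfolding high_lex_def
  using assms by (auto simp: last_conv_nth intro!: exI[of _ "length y - 1"])

theorem theorem3:
  fixes S :: "real set" and n :: nat and T :: "(real list \<times> real list) set" and s :: real
  assumes "finite S"
    and "linear_order_on (samples S n) T"
    and "monotone_order (samples S n) T"
    and "s \<in> S"
  shows "upper_set (samples S n) (replicate n s) (low_lex (samples S n))
           \<subseteq> upper_set (samples S n) (replicate n s) T
       \<and> upper_set (samples S n) (replicate n s) T
           \<subseteq> upper_set (samples S n) (replicate n s) (high_lex (samples S n))"
proof -
  let ?\<Omega> = "samples S n" and ?x = "replicate n s"
  have x: "?x \<in> ?\<Omega>" using assms(4) by (auto simp: samples_def)
  have antisym: "antisym T"
    using assms(2) by (auto simp: linear_order_on_def partial_order_on_def)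
  have mono: "(a, b) \<in> T" if "a \<in> ?\<Omega>" "b \<in> ?\<Omega>" "sample_le a b" for a b
    using assms(3) that by (auto simp: monotone_order_def)
  have y: "length y = n" "sorted y" if "y \<in> ?\<Omega>" for y
    using that by (auto simp: samples_def)
  have "(?x, y) \<in> T" if "y \<in> ?\<Omega>" "(?x, y) \<in> low_lex ?\<Omega>" for y
  proof -
    have "y \<noteq> [] \<longrightarrow> s \<le> hd y"
      using low_lex_replicate_imp_hd_ge that(2) y[OF that(1)] by blast
    then have "sample_le ?x y"
      using sample_le_replicate_left_iff y[OF that(1)] by metis
    then show ?thesis using mono x that(1) by blast
  qed
  moreover have "(?x, y) \<in> high_lex ?\<Omega>" if "y \<in> ?\<Omega>" "(?x, y) \<in> T" for y
  proof (cases "y \<noteq> [] \<and> s < last y")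
    case True
    then show ?thesis using high_lex_replicate_if_last_gt x that(1) y by metis
  next
    case False
    then have "sample_le y ?x"
      using sample_le_replicate_right_iff y[OF that(1)] by (metis not_less)
    then have "(y, ?x) \<in> T" using mono x that(1) by blast
    then have "y = ?x" using that(2) antisym by (simp add: antisym_def)
    then show ?thesis using x by (simp add: high_lex_def)
  qed
  ultimately show ?thesis by (auto simp: upper_set_def)
qed

end
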